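(* Let $(G,\alpha,\beta)$ be a minimal counterexample, where a counterexample is a triple such that $G$ is a planar graph of girth at least $6$ and $\alpha,\beta$ are $5$-colourings of $G$ such that there is no recolouring sequence from $\alpha$ to $\beta$ in which every vertex is recoloured at most $6143$ times, and minimal means $|V(G)|$ is minimum among all such counterexamples. Then $G$ does not contain a $2$-degenerate $1$-island $H$ with $|V(H)|\leq 12$.
   Context: A $5$-colouring is a proper colouring with colours $\{1,\dots,5\}$; a recolouring sequence is a sequence of proper colourings in which consecutive ones differ on exactly one vertex. Given a graph $G$ and an induced subgraph $H$ of $G$, $H$ is a $2$-degenerate $1$-island if (i) each vertex of $H$ has at most one neighbour in $G-H$, and (ii) there is an ordering $v_1,\dots,v_{|V(H)|}$ of $V(H)$ such that for each $i\in\{2,\dots,|V(H)|\}$, the vertex $v_i$ has at most two neighbours in the graph $G-H+\{v_1,\dots,v_{i-1}\}$ (the subgraph of $G$ induced by $V(G-H)\cup\{v_1,\dots,v_{i-1}\}$). *)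

theory Defs
  imports "HOL-Analysis.Analysis"
begin

definition graph :: "'a set \<Rightarrow> 'a set set \<Rightarrow> bool" where
  "graph V E \<longleftrightarrow> finite V \<and> (\<forall>e\<in>E. \<exists>u v. e = {u, v} \<and> u \<in> V \<and> v \<in> V \<and> u \<noteq> v)"

definition adj :: "'a set set \<Rightarrow> 'a \<Rightarrow> 'a \<Rightarrow> bool" where
  "adj E u v \<longleftrightarrow> {u, v} \<in> E"

definition planar :: "'a set \<Rightarrow> 'a set set \<Rightarrow> bool" where
  "planar V E \<longleftrightarrow>
    (\<exists>(p :: 'a \<Rightarrow> complex) (\<gamma> :: 'a set \<Rightarrow> real \<Rightarrow> complex).
       inj_on p V \<and>
       (\<forall>e\<in>E. \<exists>u v. e = {u, v} \<and> arc (\<gamma> e) \<and> pathstart (\<gamma> e) = p u \<and>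
                    pathfinish (\<gamma> e) = p v \<and> path_image (\<gamma> e) \<inter> p ` V = {p u, p v}) \<and>
       (\<forall>e\<in>E. \<forall>e'\<in>E. e \<noteq> e' \<longrightarrow> path_image (\<gamma> e) \<inter> path_image (\<gamma> e') \<subseteq> p ` (e \<inter> e')))"

definition is_cycle :: "'a set \<Rightarrow> 'a set set \<Rightarrow> 'a list \<Rightarrow> bool" where
  "is_cycle V E cs \<longleftrightarrow> length cs \<ge> 3 \<and> distinct cs \<and> set cs \<subseteq> V \<and>
     (\<forall>i < length cs. adj E (cs ! i) (cs ! ((i + 1) mod length cs)))"

definition girth_at_least :: "nat \<Rightarrow> 'a set \<Rightarrow> 'a set set \<Rightarrow> bool" where
  "girth_at_least g V E \<longleftrightarrow> (\<forall>cs. is_cycle V E cs \<longrightarrow> length cs \<ge> g)"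

definition colouring5 :: "'a set \<Rightarrow> 'a set set \<Rightarrow> ('a \<Rightarrow> nat) \<Rightarrow> bool" where
  "colouring5 V E c \<longleftrightarrow> (\<forall>v\<in>V. c v \<in> {1..5}) \<and> (\<forall>u\<in>V. \<forall>v\<in>V. adj E u v \<longrightarrow> c u \<noteq> c v)"

definition agree_on :: "'a set \<Rightarrow> ('a \<Rightarrow> nat) \<Rightarrow> ('a \<Rightarrow> nat) \<Rightarrow> bool" where
  "agree_on V c d \<longleftrightarrow> (\<forall>v\<in>V. c v = d v)"

definition recolouring_seq :: "'a set \<Rightarrow> 'a set set \<Rightarrow> ('a \<Rightarrow> nat) list \<Rightarrow> ('a \<Rightarrow> nat) \<Rightarrow> ('a \<Rightarrow> nat) \<Rightarrow> bool" where
  "recolouring_seq V E cs a b \<longleftrightarrow> cs \<noteq> [] \<and> agree_on V (hd cs) a \<and> agree_on V (last cs) b \<and>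
     (\<forall>c\<in>set cs. colouring5 V E c) \<and>
     (\<forall>i. i + 1 < length cs \<longrightarrow> card {v\<in>V. (cs ! i) v \<noteq> (cs ! (i + 1)) v} = 1)"

definition times_recoloured :: "('a \<Rightarrow> nat) list \<Rightarrow> 'a \<Rightarrow> nat" where
  "times_recoloured cs v = card {i. i + 1 < length cs \<and> (cs ! i) v \<noteq> (cs ! (i + 1)) v}"

definition counterexample :: "'a set \<Rightarrow> 'a set set \<Rightarrow> ('a \<Rightarrow> nat) \<Rightarrow> ('a \<Rightarrow> nat) \<Rightarrow> bool" where
  "counterexample V E a b \<longleftrightarrow> graph V E \<and> planar V E \<and> girth_at_least 6 V E \<and>
     colouring5 V E a \<and> colouring5 V E b \<and>
     \<not> (\<exists>cs. recolouring_seq V E cs a b \<and> (\<forall>v\<in>V. times_recoloured cs v \<le> 6143))"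

definition two_degenerate_one_island :: "'a set \<Rightarrow> 'a set set \<Rightarrow> 'a set \<Rightarrow> bool" where
  "two_degenerate_one_island V E S \<longleftrightarrow> S \<subseteq> V \<and>
     (\<forall>v\<in>S. card {u \<in> V - S. adj E v u} \<le> 1) \<and>
     (\<exists>vs. distinct vs \<and> set vs = S \<and>
        (\<forall>i. 1 \<le> i \<and> i < length vs \<longrightarrow>
              card {u \<in> (V - S) \<union> set (take i vs). adj E (vs ! i) u} \<le> 2))"

end

theory Submission
  imports Defs
begin

(* Deleting a nonempty 2-degenerate 1-island S leaves a smaller planar graph of girth at least 6,
   so by minimality alpha and beta are joined there by a recolouring sequence that recolours every
   vertex at most 6143 times.  The vertices v_0, v_1, ... of S are put back in the degeneracy
   order.  If v_i has the set D of neighbours among the vertices present, then 4 - |D| >= 1 of the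
   5 colours are spare, so v_i can always pick a colour that survives the next 4 - |D|
   recolourings of D; hence v_i is recoloured at most ceil(T / (4 - |D|)) + 1 times, where T
   counts the recolourings of D.  As v_0 has at most one neighbour present and every v_i has at
   most one neighbour outside S, the bounds for v_0, ..., v_11 are 2049, 4097, 5121, ..., 6143, so
   G itself would have a recolouring sequence within the bound. *)

section \<open>Recolouring sequences as walks\<close>

fun colouring_walk :: "'a set \<Rightarrow> 'a set set \<Rightarrow> ('a \<Rightarrow> nat) list \<Rightarrow> bool" where
  "colouring_walk W E [] = False"
| "colouring_walk W E [c] = colouring5 W E c"
| "colouring_walk W E (c # c' # cs) \<longleftrightarrow>
     colouring5 W E c \<and> card {v\<in>W. c v \<noteq> c' v} = 1 \<and> colouring_walk W E (c' # cs)"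

lemma colouring_walk_iff:
  "colouring_walk W E cs \<longleftrightarrow> cs \<noteq> [] \<and> (\<forall>c\<in>set cs. colouring5 W E c) \<and>
     (\<forall>i. i + 1 < length cs \<longrightarrow> card {v\<in>W. (cs ! i) v \<noteq> (cs ! (i + 1)) v} = 1)"
proof (induction W E cs rule: colouring_walk.induct)
  case (3 W E c c' cs)
  have "(\<forall>i. i + 1 < length (c # c' # cs) \<longrightarrow> P i) \<longleftrightarrow> P 0 \<and> (\<forall>i. i + 1 < length (c' # cs) \<longrightarrow> P (Suc i))"
    for P :: "nat \<Rightarrow> bool"
    by (auto simp: less_Suc_eq_0_disj)
  from this[of "\<lambda>i. card {v\<in>W. ((c # c' # cs) ! i) v \<noteq> ((c # c' # cs) ! (i + 1)) v} = 1"]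
  show ?case using "3.IH" by auto
qed auto

lemma recolouring_seq_iff_walk:
  "recolouring_seq W E cs a b \<longleftrightarrow>
     colouring_walk W E cs \<and> agree_on W (hd cs) a \<and> agree_on W (last cs) b"
  unfolding recolouring_seq_def colouring_walk_iff by auto

lemma colouring_walk_nonempty: "colouring_walk W E cs \<Longrightarrow> cs \<noteq> []"
  by (cases cs) auto

lemma times_recoloured_singleton [simp]: "times_recoloured [c] v = 0"
  by (simp add: times_recoloured_def)

lemma times_recoloured_Cons:
  assumes "cs \<noteq> []"
  shows "times_recoloured (c # cs) v = (if c v \<noteq> hd cs v then 1 else 0) + times_recoloured cs v"
proof -
  let ?I = "{i. i + 1 < length cs \<and> (cs ! i) v \<noteq> (cs ! (i + 1)) v}"
  have "{i. i + 1 < length (c # cs) \<and> ((c # cs) ! i) v \<noteq> ((c # cs) ! (i + 1)) v}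
     = (if c v \<noteq> hd cs v then {0} else {}) \<union> Suc ` ?I"
  proof (intro set_eqI iffI)
    fix i assume "i \<in> {i. i + 1 < length (c # cs) \<and> ((c # cs) ! i) v \<noteq> ((c # cs) ! (i + 1)) v}"
    then show "i \<in> (if c v \<noteq> hd cs v then {0} else {}) \<union> Suc ` ?I"
      using assms by (cases i) (auto simp: hd_conv_nth)
  qed (use assms in \<open>auto simp: hd_conv_nth split: if_splits\<close>)
  moreover have "finite ?I"
    by (rule finite_subset[of _ "{..<length cs}"]) auto
  ultimately show ?thesis
    unfolding times_recoloured_def by (simp add: card_image)
qed

definition changes_on :: "'a set \<Rightarrow> ('a \<Rightarrow> nat) \<Rightarrow> ('a \<Rightarrow> nat) \<Rightarrow> bool" where
  "changes_on D c c' \<longleftrightarrow> (\<exists>u\<in>D. c u \<noteq> c' u)"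

fun moves_on :: "'a set \<Rightarrow> ('a \<Rightarrow> nat) list \<Rightarrow> nat" where
  "moves_on D [] = 0"
| "moves_on D [c] = 0"
| "moves_on D (c # c' # cs) = (if changes_on D c c' then 1 else 0) + moves_on D (c' # cs)"

text \<open>The colours shown on D along cs up to, but excluding, the (k+1)-st step that changes D:
  a vertex adjacent exactly to D may keep any other colour until then.\<close>

fun window_colours :: "'a set \<Rightarrow> nat \<Rightarrow> ('a \<Rightarrow> nat) list \<Rightarrow> nat set" where
  "window_colours D k [] = {}"
| "window_colours D k [c] = c ` D"
| "window_colours D k (c # c' # cs) = c ` D \<union>
     (if \<not> changes_on D c c' then window_colours D k (c' # cs)
      else if k = 0 then {} else window_colours D (k - 1) (c' # cs))"

lemma moves_on_le_sum_times_recoloured: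
  "finite D \<Longrightarrow> moves_on D cs \<le> (\<Sum>u\<in>D. times_recoloured cs u)"
proof (induction cs rule: induct_list012)
  case (3 c c' cs)
  have "(if changes_on D c c' then 1 else 0) \<le> (\<Sum>u\<in>D. if c u \<noteq> c' u then 1 else 0 :: nat)"
  proof (cases "changes_on D c c'")
    case True
    then obtain u where "u \<in> D" "c u \<noteq> c' u" by (auto simp: changes_on_def)
    then show ?thesis
      using member_le_sum[of u D "\<lambda>u. if c u \<noteq> c' u then 1 else 0 :: nat"] "3.prems" by simp
  qed simp
  then show ?case
    using "3" by (simp add: times_recoloured_Cons sum.distrib)
qed auto

lemma image_subset_window_colours: "cs \<noteq> [] \<Longrightarrow> hd cs ` D \<subseteq> window_colours D k cs"
  by (induction D k cs rule: window_colours.induct) auto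

lemma window_colours_0: "cs \<noteq> [] \<Longrightarrow> window_colours D 0 cs = hd cs ` D"
  by (induction cs rule: induct_list012) (auto simp: changes_on_def)

lemma finite_window_colours: "finite D \<Longrightarrow> finite (window_colours D k cs)"
  by (induction D k cs rule: window_colours.induct) auto

lemma card_window_colours:
  assumes "colouring_walk W E cs" "D \<subseteq> W" "finite D"
  shows "card (window_colours D k cs) \<le> card D + k"
  using assms(1)
proof (induction cs arbitrary: k rule: induct_list012)
  case (2 c)
  show ?case using card_image_le[OF \<open>finite D\<close>, of c] by simp
next
  case (3 c c' cs)
  obtain u where u: "{v\<in>W. c v \<noteq> c' v} = {u}"
    using "3.prems" by (auto simp: card_1_singleton_iff)
  show ?case
  proof (cases "changes_on D c c'")
    case False
    then have "c ` D = c' ` D" by (auto simp: changes_on_def intro: image_cong)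
    then show ?thesis
      using "3.IH"(2)[of k] "3.prems" False image_subset_window_colours[of "c' # cs" D k]
      by (simp add: Un_absorb1)
  next
    case True
    show ?thesis
    proof (cases k)
      case 0
      then show ?thesis using True card_image_le[OF \<open>finite D\<close>, of c] by simp
    next
      case (Suc k')
      have "c v \<in> c' ` D \<union> {c u}" if "v \<in> D" for v
      proof (cases "v = u")
        case False
        then have "c v = c' v" using u that \<open>D \<subseteq> W\<close> by blast
        then show ?thesis using that by simp
      qed simp
      then have "c ` D \<subseteq> c' ` D \<union> {c u}" by blast
      then have "window_colours D k (c # c' # cs) \<subseteq> insert (c u) (window_colours D k' (c' # cs))"
        using True Suc image_subset_window_colours[of "c' # cs" D k'] by auto
      then have "card (window_colours D k (c # c' # cs)) \<le> card (insert (c u) (window_colours D k' (c' # cs)))"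
        by (simp add: card_mono finite_window_colours[OF \<open>finite D\<close>])
      also have "\<dots> \<le> Suc (card (window_colours D k' (c' # cs)))"
        by (simp add: card_insert_if finite_window_colours[OF \<open>finite D\<close>])
      finally show ?thesis using "3.IH"(2)[of k'] "3.prems" Suc by simp
    qed
  qed
qed simp

section \<open>Adding a vertex to a recolouring sequence\<close>

lemma adj_commute: "adj E u v \<longleftrightarrow> adj E v u"
  by (simp add: adj_def insert_commute)

context
  fixes W :: "'a set" and E :: "'a set set" and x :: 'a and D :: "'a set"
  assumes x_notin_W: "x \<notin> W" and no_loop: "\<not> adj E x x" and D_eq: "D = {u \<in> W. adj E x u}"
begin

lemma colouring5_insert:
  assumes "colouring5 W E c" "y \<in> {1..5}" "y \<notin> c ` D"
  shows "colouring5 (insert x W) E (c(x := y))"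
  unfolding colouring5_def
proof (intro conjI ballI impI)
  fix v assume "v \<in> insert x W"
  then show "(c(x := y)) v \<in> {1..5}" using assms by (auto simp: colouring5_def)
next
  fix u v assume "u \<in> insert x W" "v \<in> insert x W" "adj E u v"
  then show "(c(x := y)) u \<noteq> (c(x := y)) v"
    using assms no_loop D_eq adj_commute[of E u v] by (auto simp: colouring5_def)
qed

lemma card_diff_fun_upd_same:
  "card {v \<in> insert x W. (c(x := y)) v \<noteq> (c'(x := y)) v} = card {v \<in> W. c v \<noteq> c' v}"
proof -
  have "{v \<in> insert x W. (c(x := y)) v \<noteq> (c'(x := y)) v} = {v \<in> W. c v \<noteq> c' v}"
    using x_notin_W by auto
  then show ?thesis by simp
qed

lemma card_diff_fun_upd_other:
  "y \<noteq> y' \<Longrightarrow> card {v \<in> insert x W. (c(x := y)) v \<noteq> (c(x := y')) v} = 1"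
proof -
  assume "y \<noteq> y'"
  then have "{v \<in> insert x W. (c(x := y)) v \<noteq> (c(x := y')) v} = {x}"
    using x_notin_W by auto
  then show ?thesis by simp
qed

lemma colouring_walk_Cons_lift:
  assumes walk: "colouring_walk (insert x W) E cs'" and hd_cs': "hd cs' = c'(x := y')"
    and step: "colouring5 W E c" "card {v \<in> W. c v \<noteq> c' v} = 1"
    and y: "y \<in> {1..5}" "y \<notin> c ` D" and y': "y' \<in> {1..5}" "y' \<notin> c ` D"
  obtains cs'' where "colouring_walk (insert x W) E cs''" "hd cs'' = c(x := y)" "last cs'' = last cs'"
    "\<forall>w\<in>W. times_recoloured cs'' w = times_recoloured (c # cs') w"
    "times_recoloured cs'' x \<le> times_recoloured cs' x + (if y = y' then 0 else 1)"
proof -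
  have ne: "cs' \<noteq> []" using walk colouring_walk_nonempty by blast
  have lift: "colouring_walk (insert x W) E (c(x := y') # cs')"
    using walk hd_cs' ne colouring5_insert[OF step(1) y'] card_diff_fun_upd_same[of c y' c'] step(2)
    by (cases cs') auto
  show thesis
  proof (cases "y = y'")
    case True
    then show thesis
      using that[of "c(x := y') # cs'"] lift hd_cs' ne x_notin_W
      by (auto simp: times_recoloured_Cons)
  next
    case False
    then show thesis
      using that[of "c(x := y) # c(x := y') # cs'"] lift colouring5_insert[OF step(1) y] hd_cs' ne
        x_notin_W card_diff_fun_upd_other[of y y' c]
      by (auto simp: times_recoloured_Cons)
  qed
qed

lemma next_colour_exists:
  assumes "finite D" "1 \<le> g" "card D + g \<le> 4"
    and walk: "colouring_walk W E (c # c' # cs)"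
    and y: "y \<in> {1..5}" "y \<notin> window_colours D k (c # c' # cs)"
  obtains y' k' where "y' \<in> {1..5}" "y' \<notin> c ` D" "y' \<notin> window_colours D k' (c' # cs)"
    "(moves_on D (c' # cs) - k' + g - 1) div g + 1 + (if y = y' then 0 else 1)
      \<le> (moves_on D (c # c' # cs) - k + g - 1) div g + 1"
proof -
  let ?T = "moves_on D (c' # cs)"
  consider "\<not> changes_on D c c'" | k' where "changes_on D c c'" "k = Suc k'"
    | "changes_on D c c'" "k = 0"
    by (cases k) auto
  then show thesis
  proof cases
    case 1
    then show thesis using that[of y k] y by simp
  next
    case (2 k')
    then show thesis using that[of y k'] y by simp
  next
    case 3
    have "card (window_colours D g (c # c' # cs)) \<le> card D + g"
      using card_window_colours[OF walk _ \<open>finite D\<close>] D_eq by blast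
    then have "card (window_colours D g (c # c' # cs)) < card {1..5::nat}"
      using \<open>card D + g \<le> 4\<close> by simp
    then obtain y' where y': "y' \<in> {1..5}" "y' \<notin> window_colours D g (c # c' # cs)"
      by (metis card_mono finite_window_colours[OF \<open>finite D\<close>] not_less subsetI)
    have "(?T - (g - 1) + g - 1) div g + 1 \<le> (?T + g) div g"
      using \<open>1 \<le> g\<close> by (cases "?T \<le> g - 1") (auto simp: div_add_self2)
    then show thesis
      using that[of y' "g - 1"] y' 3 \<open>1 \<le> g\<close> by auto
  qed
qed

text \<open>The invariant is that the current colour y of x is safe until the (k+1)-st recolouring of D.
  When it expires, card D + g < 5 leaves a colour that is safe for the next g recolourings of D, so
  x moves at most once per g recolourings of D, plus once at the end to reach z.\<close>

lemma colouring_walk_lift: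
  assumes "finite D" "1 \<le> g" "card D + g \<le> 4"
  shows "colouring_walk W E cs \<Longrightarrow> y \<in> {1..5} \<Longrightarrow> y \<notin> window_colours D k cs \<Longrightarrow>
    z \<in> {1..5} \<Longrightarrow> z \<notin> last cs ` D \<Longrightarrow>
    \<exists>cs'. colouring_walk (insert x W) E cs' \<and> hd cs' = (hd cs)(x := y) \<and>
      last cs' = (last cs)(x := z) \<and> (\<forall>w\<in>W. times_recoloured cs' w = times_recoloured cs w) \<and>
      times_recoloured cs' x \<le> (moves_on D cs - k + g - 1) div g + 1"
proof (induction cs arbitrary: y k rule: induct_list012)
  case (2 c)
  show ?case
  proof (cases "y = z")
    case True
    then show ?thesis using 2 colouring5_insert[of c y] by (intro exI[of _ "[c(x := y)]"]) simp
  next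
    case False
    then show ?thesis
      using 2 colouring5_insert[of c] card_diff_fun_upd_other[of y z c] x_notin_W \<open>1 \<le> g\<close>
      by (intro exI[of _ "[c(x := y), c(x := z)]"]) (auto simp: times_recoloured_Cons)
  qed
next
  case (3 c c' cs)
  then have y_free: "y \<notin> c ` D"
    using image_subset_window_colours[of "c # c' # cs" D k] by auto
  have walk': "colouring_walk W E (c' # cs)" and z_free: "z \<notin> last (c' # cs) ` D"
    using "3.prems" by auto
  let ?T = "moves_on D (c' # cs)"
  obtain y' k' where y': "y' \<in> {1..5}" "y' \<notin> c ` D" "y' \<notin> window_colours D k' (c' # cs)"
    and bound: "(?T - k' + g - 1) div g + 1 + (if y = y' then 0 else 1)
      \<le> (moves_on D (c # c' # cs) - k + g - 1) div g + 1"
    using next_colour_exists[OF assms "3.prems"(1-3)] by blast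
  obtain cs' where cs': "colouring_walk (insert x W) E cs'" "hd cs' = c'(x := y')"
    "last cs' = (last (c' # cs))(x := z)" "\<forall>w\<in>W. times_recoloured cs' w = times_recoloured (c' # cs) w"
    "times_recoloured cs' x \<le> (?T - k' + g - 1) div g + 1"
    using "3.IH"(2)[OF walk' y'(1,3) \<open>z \<in> {1..5}\<close> z_free] unfolding list.sel(1) by blast
  obtain cs'' where "colouring_walk (insert x W) E cs''" "hd cs'' = c(x := y)" "last cs'' = last cs'"
    "\<forall>w\<in>W. times_recoloured cs'' w = times_recoloured (c # cs') w"
    "times_recoloured cs'' x \<le> times_recoloured cs' x + (if y = y' then 0 else 1)"
    using colouring_walk_Cons_lift[OF cs'(1,2)] "3.prems" y_free y' by auto
  then show ?case
    using cs' bound colouring_walk_nonempty[OF cs'(1)] x_notin_W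
    by (intro exI[of _ cs'']) (auto simp: times_recoloured_Cons)
qed simp

lemma recolouring_seq_insert:
  assumes "finite D" "1 \<le> g" "card D + g \<le> 4" and seq: "recolouring_seq W E cs a b"
    and a: "colouring5 (insert x W) E a" and b: "colouring5 (insert x W) E b"
  obtains cs' where "recolouring_seq (insert x W) E cs' a b"
    "\<forall>w\<in>W. times_recoloured cs' w = times_recoloured cs w"
    "times_recoloured cs' x \<le> ((\<Sum>u\<in>D. times_recoloured cs u) + g - 1) div g + 1"
proof -
  from seq have walk: "colouring_walk W E cs" and hd_a: "agree_on W (hd cs) a"
    and last_b: "agree_on W (last cs) b"
    by (auto simp: recolouring_seq_iff_walk)
  have "c x \<notin> c ` D" if "colouring5 (insert x W) E c" for c
    using that D_eq by (auto simp: colouring5_def)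
  then have "a x \<notin> hd cs ` D" "b x \<notin> last cs ` D"
    using a b hd_a last_b D_eq by (auto simp: agree_on_def image_iff)
  moreover have "a x \<in> {1..5}" "b x \<in> {1..5}"
    using a b by (auto simp: colouring5_def)
  ultimately obtain cs' where cs': "colouring_walk (insert x W) E cs'" "hd cs' = (hd cs)(x := a x)"
    "last cs' = (last cs)(x := b x)" "\<forall>w\<in>W. times_recoloured cs' w = times_recoloured cs w"
    "times_recoloured cs' x \<le> (moves_on D cs + g - 1) div g + 1"
    using colouring_walk_lift[OF assms(1-3) walk, of "a x" 0 "b x"]
      window_colours_0[OF colouring_walk_nonempty[OF walk]]
    by auto
  have "(moves_on D cs + g - 1) div g \<le> ((\<Sum>u\<in>D. times_recoloured cs u) + g - 1) div g"
    using moves_on_le_sum_times_recoloured[OF \<open>finite D\<close>, of cs] by (simp add: div_le_mono)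
  then show thesis
    using that[of cs'] cs' hd_a last_b by (auto simp: recolouring_seq_iff_walk agree_on_def)
qed

end

section \<open>Induced subgraphs and minimality\<close>

definition induced_edges :: "'a set \<Rightarrow> 'a set set \<Rightarrow> 'a set set" where
  "induced_edges W E = {e \<in> E. e \<subseteq> W}"

lemma adj_induced_edges: "u \<in> W \<Longrightarrow> v \<in> W \<Longrightarrow> adj (induced_edges W E) u v \<longleftrightarrow> adj E u v"
  by (auto simp: adj_def induced_edges_def)

lemma colouring5_induced_edges: "colouring5 W (induced_edges W E) c \<longleftrightarrow> colouring5 W E c"
  by (auto simp: colouring5_def adj_induced_edges)

lemma recolouring_seq_induced_edges:
  "recolouring_seq W (induced_edges W E) cs a b \<longleftrightarrow> recolouring_seq W E cs a b"
  by (simp add: recolouring_seq_def colouring5_induced_edges)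

lemma colouring5_subset: "colouring5 V E c \<Longrightarrow> W \<subseteq> V \<Longrightarrow> colouring5 W E c"
  unfolding colouring5_def by blast

lemma graph_induced_edges:
  assumes "graph V E" "W \<subseteq> V"
  shows "graph W (induced_edges W E)"
  unfolding graph_def
proof (intro conjI ballI)
  show "finite W" using assms finite_subset by (auto simp: graph_def)
next
  fix e assume "e \<in> induced_edges W E"
  then obtain u v where "e = {u, v}" "u \<noteq> v" "e \<subseteq> W"
    using assms(1) unfolding graph_def induced_edges_def by blast
  then show "\<exists>u v. e = {u, v} \<and> u \<in> W \<and> v \<in> W \<and> u \<noteq> v" by blast
qed

lemma planar_induced_edges:
  assumes "planar V E" "W \<subseteq> V"
  shows "planar W (induced_edges W E)"
proof -
  obtain p :: "'a \<Rightarrow> complex" and \<gamma> :: "'a set \<Rightarrow> real \<Rightarrow> complex" where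
    inj: "inj_on p V" and
    arcs: "\<forall>e\<in>E. \<exists>u v. e = {u, v} \<and> arc (\<gamma> e) \<and> pathstart (\<gamma> e) = p u \<and>
       pathfinish (\<gamma> e) = p v \<and> path_image (\<gamma> e) \<inter> p ` V = {p u, p v}" and
    crossings: "\<forall>e\<in>E. \<forall>e'\<in>E. e \<noteq> e' \<longrightarrow> path_image (\<gamma> e) \<inter> path_image (\<gamma> e') \<subseteq> p ` (e \<inter> e')"
    using assms(1) unfolding planar_def by blast
  have "\<exists>u v. e = {u, v} \<and> arc (\<gamma> e) \<and> pathstart (\<gamma> e) = p u \<and>
      pathfinish (\<gamma> e) = p v \<and> path_image (\<gamma> e) \<inter> p ` W = {p u, p v}"
    if "e \<in> induced_edges W E" for e
  proof -
    from that arcs obtain u v where uv: "e = {u, v}" "arc (\<gamma> e)" "pathstart (\<gamma> e) = p u"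
      "pathfinish (\<gamma> e) = p v" "path_image (\<gamma> e) \<inter> p ` V = {p u, p v}" "e \<subseteq> W"
      by (auto simp: induced_edges_def)
    then have "path_image (\<gamma> e) \<inter> p ` W = {p u, p v}" using assms(2) by blast
    with uv show ?thesis by blast
  qed
  then show ?thesis
    unfolding planar_def using inj_on_subset[OF inj assms(2)] crossings
    by (intro exI[of _ p] exI[of _ \<gamma>]) (auto simp: induced_edges_def)
qed

lemma girth_at_least_induced_edges:
  "girth_at_least k V E \<Longrightarrow> W \<subseteq> V \<Longrightarrow> girth_at_least k W (induced_edges W E)"
  unfolding girth_at_least_def is_cycle_def adj_def induced_edges_def by blast

lemma minimal_counterexample_recolourable_psubset:
  fixes V :: "'a set"
  assumes ce: "counterexample V E \<alpha> \<beta>"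
    and min: "\<And>(V' :: 'a set) E' \<alpha>' \<beta>'. counterexample V' E' \<alpha>' \<beta>' \<Longrightarrow> card V \<le> card V'"
    and "W \<subset> V"
  obtains cs where "recolouring_seq W E cs \<alpha> \<beta>" "\<forall>v\<in>W. times_recoloured cs v \<le> 6143"
proof -
  from ce have G: "graph V E" "planar V E" "girth_at_least 6 V E" "colouring5 V E \<alpha>" "colouring5 V E \<beta>"
    unfolding counterexample_def by auto
  have "card W < card V"
    using G(1) \<open>W \<subset> V\<close> by (simp add: graph_def psubset_card_mono)
  then have "\<not> counterexample W (induced_edges W E) \<alpha> \<beta>"
    using min[of W] by fastforce
  moreover have "W \<subseteq> V" using \<open>W \<subset> V\<close> by blast
  ultimately show thesis
    using that G graph_induced_edges planar_induced_edges girth_at_least_induced_edges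
      colouring5_subset colouring5_induced_edges recolouring_seq_induced_edges
    unfolding counterexample_def by metis
qed

section \<open>Putting back a 2-degenerate 1-island\<close>

text \<open>6145 - 2^(12 - i) is the closed form of the budgets b_0 = ceil(6143/3) + 1 = 2049 and
  b_(i+1) = ceil((6143 + b_i)/2) + 1 of the island vertices v_i; 6145 - 2^(13 - i) = b_(i-1) bounds
  the earlier ones (it truncates to 0 for i = 0, when there are none).\<close>

lemma island_vertex_budget:
  fixes t :: "'a \<Rightarrow> nat"
  assumes "finite D" "card D \<le> 2" "card (D \<inter> V0) \<le> 1" "\<forall>u\<in>D. t u \<le> 6143"
    "\<forall>u\<in>D - V0. t u \<le> 6145 - 2 ^ (13 - i)" "i \<le> 11" "i = 0 \<Longrightarrow> D \<subseteq> V0"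
  shows "(sum t D + (4 - card D) - 1) div (4 - card D) + 1 \<le> 6145 - 2 ^ (12 - i)"
proof -
  define m :: nat where "m = 2 ^ (12 - i)"
  have "13 - i = Suc (12 - i)" using \<open>i \<le> 11\<close> by simp
  then have m: "1 \<le> m" "m \<le> 4096" "2 ^ (13 - i) = 2 * m"
    using power_increasing[of "12 - i" 12 "2::nat"] by (simp_all add: m_def)
  consider "card D = 0" | "card D = 1" | "card D = 2" using assms(2) by linarith
  then show ?thesis
  proof cases
    case 1
    then show ?thesis using m \<open>finite D\<close> by (simp add: m_def[symmetric])
  next
    case 2
    then obtain u where "D = {u}" by (auto simp: card_1_singleton_iff)
    then show ?thesis using m assms(4) by (simp add: m_def[symmetric])
  next
    case 3
    then obtain u v where uv: "D = {u, v}" "u \<noteq> v" by (auto simp: card_2_iff)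
    then have "u \<notin> V0 \<or> v \<notin> V0" using assms(3) by (auto simp: Int_insert_left)
    then have one_late: "t u \<le> 6145 - 2 * m \<or> t v \<le> 6145 - 2 * m" and "1 \<le> i"
      using assms(5,7) uv m(3) by (auto simp: Suc_le_eq)
    then have "2 * m \<le> 4096"
      using power_increasing[of "12 - i" 11 "2::nat"] by (simp add: m_def)
    moreover have "t u \<le> 6143" "t v \<le> 6143" using assms(4) uv by auto
    ultimately have "t u + t v + 1 \<le> 2 * (6144 - m) + 1" using one_late by linarith
    then have "(t u + t v + 1) div 2 \<le> 6144 - m"
      using div_le_mono[of _ _ 2] by fastforce
    then show ?thesis using uv m 3 by (simp add: m_def[symmetric])
  qed
qed

lemma recolouring_seq_insert_island_vertex:
  assumes "finite W" "x \<notin> W" "\<not> adj E x x" "V0 \<subseteq> W"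
    and seq: "recolouring_seq W E cs \<alpha> \<beta>"
    and "colouring5 (insert x W) E \<alpha>" "colouring5 (insert x W) E \<beta>"
    and "card {u \<in> W. adj E x u} \<le> 2" "card {u \<in> V0. adj E x u} \<le> 1" "i = 0 \<Longrightarrow> W = V0"
    and "\<forall>w\<in>W. times_recoloured cs w \<le> 6143"
    and "\<forall>w\<in>W - V0. times_recoloured cs w \<le> 6145 - 2 ^ (13 - i)" "i \<le> 11"
  obtains cs' where "recolouring_seq (insert x W) E cs' \<alpha> \<beta>"
    "\<forall>w\<in>W. times_recoloured cs' w = times_recoloured cs w"
    "times_recoloured cs' x \<le> 6145 - 2 ^ (12 - i)"
proof -
  define D where "D = {u \<in> W. adj E x u}"
  have "finite D" "D \<subseteq> W" using \<open>finite W\<close> by (simp_all add: D_def)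
  moreover have "D \<inter> V0 = {u \<in> V0. adj E x u}" using \<open>V0 \<subseteq> W\<close> by (auto simp: D_def)
  then have "card (D \<inter> V0) \<le> 1" using assms(9) by simp
  moreover have "i = 0 \<Longrightarrow> D \<subseteq> V0" using assms(10) \<open>D \<subseteq> W\<close> by blast
  ultimately have budget: "((\<Sum>u\<in>D. times_recoloured cs u) + (4 - card D) - 1) div (4 - card D) + 1
      \<le> 6145 - 2 ^ (12 - i)"
    using island_vertex_budget[of D V0 "times_recoloured cs" i] assms(8,11-13) by (auto simp: D_def)
  have g: "1 \<le> 4 - card D" "card D + (4 - card D) \<le> 4" using assms(8) by (simp_all add: D_def)
  obtain cs' where "recolouring_seq (insert x W) E cs' \<alpha> \<beta>"
    "\<forall>w\<in>W. times_recoloured cs' w = times_recoloured cs w"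
    "times_recoloured cs' x \<le> ((\<Sum>u\<in>D. times_recoloured cs u) + (4 - card D) - 1) div (4 - card D) + 1"
    using recolouring_seq_insert[OF assms(2,3) D_def \<open>finite D\<close> g seq assms(6,7)] by blast
  with budget show thesis using that by fastforce
qed

lemma graph_not_adj_self: "graph V E \<Longrightarrow> \<not> adj E v v"
  unfolding graph_def adj_def by (metis doubleton_eq_iff)

lemma two_degenerate_one_island_ordering:
  assumes "two_degenerate_one_island V E S"
  obtains vs where "distinct vs" "set vs = S" "S \<subseteq> V"
    "\<And>v. v \<in> S \<Longrightarrow> card {u \<in> V - S. adj E v u} \<le> 1"
    "\<And>i. i < length vs \<Longrightarrow> card {u \<in> (V - S) \<union> set (take i vs). adj E (vs ! i) u} \<le> 2"
proof -
  obtain vs where vs: "distinct vs" "set vs = S" "S \<subseteq> V"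
    "\<And>v. v \<in> S \<Longrightarrow> card {u \<in> V - S. adj E v u} \<le> 1"
    "\<And>i. 1 \<le> i \<Longrightarrow> i < length vs \<Longrightarrow> card {u \<in> (V - S) \<union> set (take i vs). adj E (vs ! i) u} \<le> 2"
    using assms unfolding two_degenerate_one_island_def by blast
  have "card {u \<in> (V - S) \<union> set (take i vs). adj E (vs ! i) u} \<le> 2" if "i < length vs" for i
  proof (cases i)
    case 0
    then show ?thesis using vs(4)[of "vs ! 0"] nth_mem[OF that] vs(2) by simp
  qed (use vs(5) that in auto)
  with vs show thesis using that by blast
qed

context
  fixes V :: "'a set" and E :: "'a set set" and S :: "'a set" and vs :: "'a list"
    and \<alpha> \<beta> :: "'a \<Rightarrow> nat"
  assumes G: "graph V E" and \<alpha>: "colouring5 V E \<alpha>" and \<beta>: "colouring5 V E \<beta>"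
    and vs: "distinct vs" "set vs = S" "S \<subseteq> V" "length vs \<le> 12"
    and one_outside: "\<And>v. v \<in> S \<Longrightarrow> card {u \<in> V - S. adj E v u} \<le> 1"
    and two_before: "\<And>i. i < length vs \<Longrightarrow> card {u \<in> (V - S) \<union> set (take i vs). adj E (vs ! i) u} \<le> 2"
begin

lemma island_prefix_Suc:
  assumes i: "i < length vs"
    and cs: "recolouring_seq ((V - S) \<union> set (take i vs)) E cs \<alpha> \<beta>"
      "\<forall>w\<in>V - S. times_recoloured cs w \<le> 6143"
      "\<forall>w\<in>set (take i vs). times_recoloured cs w \<le> 6145 - 2 ^ (13 - i)"
  obtains cs' where "recolouring_seq ((V - S) \<union> set (take (Suc i) vs)) E cs' \<alpha> \<beta>"
    "\<forall>w\<in>V - S. times_recoloured cs' w \<le> 6143"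
    "\<forall>w\<in>set (take (Suc i) vs). times_recoloured cs' w \<le> 6145 - 2 ^ (12 - i)"
proof -
  define W where "W = (V - S) \<union> set (take i vs)"
  define x where "x = vs ! i"
  have take_Suc: "set (take (Suc i) vs) = insert x (set (take i vs))"
    using i by (simp add: x_def take_Suc_conv_app_nth)
  have "x \<in> S" using vs(2) i by (auto simp: x_def)
  moreover have "x \<notin> set (take i vs)"
    using vs(1) i by (auto simp: x_def in_set_conv_nth nth_eq_iff_index_eq)
  ultimately have "x \<notin> W" by (simp add: W_def)
  have "insert x W \<subseteq> V" using \<open>x \<in> S\<close> vs(2,3) set_take_subset[of i vs] by (auto simp: W_def)
  have "i \<le> 11" using i vs(4) by simp
  then have "2 ^ (13 - i) \<ge> (2::nat)" using power_increasing[of 1 "13 - i" "2::nat"] by simp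
  obtain cs' where cs': "recolouring_seq (insert x W) E cs' \<alpha> \<beta>"
    "\<forall>w\<in>W. times_recoloured cs' w = times_recoloured cs w"
    "times_recoloured cs' x \<le> 6145 - 2 ^ (12 - i)"
  proof (rule recolouring_seq_insert_island_vertex[of W x E "V - S" cs \<alpha> \<beta> i])
    show "finite W" using G \<open>insert x W \<subseteq> V\<close> finite_subset by (auto simp: graph_def)
  qed (use \<open>x \<notin> W\<close> graph_not_adj_self[OF G] cs one_outside two_before \<open>x \<in> S\<close> i \<open>i \<le> 11\<close>
         colouring5_subset[OF \<alpha> \<open>insert x W \<subseteq> V\<close>] colouring5_subset[OF \<beta> \<open>insert x W \<subseteq> V\<close>]
         \<open>2 ^ (13 - i) \<ge> 2\<close> in \<open>auto simp: W_def x_def\<close>)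
  have "(6145 :: nat) - 2 ^ (13 - i) \<le> 6145 - 2 ^ (12 - i)"
    by (intro diff_le_mono2 power_increasing) auto
  then show thesis
    using that[of cs'] cs cs' unfolding take_Suc by (fastforce simp: W_def)
qed

lemma island_prefix:
  assumes "i \<le> length vs"
    and seq: "recolouring_seq (V - S) E cs \<alpha> \<beta>" "\<forall>v\<in>V - S. times_recoloured cs v \<le> 6143"
  shows "\<exists>cs'. recolouring_seq ((V - S) \<union> set (take i vs)) E cs' \<alpha> \<beta> \<and>
    (\<forall>w\<in>V - S. times_recoloured cs' w \<le> 6143) \<and>
    (\<forall>w\<in>set (take i vs). times_recoloured cs' w \<le> 6145 - 2 ^ (13 - i))"
  using assms(1)
proof (induction i)
  case 0
  then show ?case using seq by auto
next
  case (Suc i)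
  then obtain cs' where cs': "recolouring_seq ((V - S) \<union> set (take i vs)) E cs' \<alpha> \<beta>"
    "\<forall>w\<in>V - S. times_recoloured cs' w \<le> 6143"
    "\<forall>w\<in>set (take i vs). times_recoloured cs' w \<le> 6145 - 2 ^ (13 - i)"
    by auto
  have "i < length vs" using Suc.prems by simp
  show ?case by (rule island_prefix_Suc[OF \<open>i < length vs\<close> cs']) auto
qed

end

lemma recolouring_seq_extend_island:
  assumes G: "graph V E" and island: "two_degenerate_one_island V E S" "card S \<le> 12"
    and \<alpha>: "colouring5 V E \<alpha>" and \<beta>: "colouring5 V E \<beta>"
    and seq: "recolouring_seq (V - S) E cs \<alpha> \<beta>" "\<forall>v\<in>V - S. times_recoloured cs v \<le> 6143"
  obtains cs' where "recolouring_seq V E cs' \<alpha> \<beta>" "\<forall>v\<in>V. times_recoloured cs' v \<le> 6143"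
proof -
  obtain vs where vs: "distinct vs" "set vs = S" "S \<subseteq> V"
    "\<And>v. v \<in> S \<Longrightarrow> card {u \<in> V - S. adj E v u} \<le> 1"
    "\<And>i. i < length vs \<Longrightarrow> card {u \<in> (V - S) \<union> set (take i vs). adj E (vs ! i) u} \<le> 2"
    using two_degenerate_one_island_ordering[OF island(1)] by blast
  have "length vs \<le> 12" using island(2) vs(1,2) distinct_card by fastforce
  from island_prefix[OF G \<alpha> \<beta> vs(1-3) this vs(4,5) order_refl seq]
  obtain cs' where "recolouring_seq V E cs' \<alpha> \<beta>"
    "\<forall>w\<in>V - S. times_recoloured cs' w \<le> 6143"
    "\<forall>w\<in>S. times_recoloured cs' w \<le> 6145 - 2 ^ (13 - length vs)"
    using vs(2,3) by (auto simp: Un_absorb2)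
  moreover have "(2::nat) \<le> 2 ^ (13 - length vs)"
    using power_increasing[of 1 "13 - length vs" "2::nat"] \<open>length vs \<le> 12\<close> by simp
  ultimately show thesis using that by force
qed

theorem lemma2:
  fixes V :: "'a set" and E :: "'a set set" and \<alpha> \<beta> :: "'a \<Rightarrow> nat"
  assumes "counterexample V E \<alpha> \<beta>"
    and "\<And>(V' :: 'a set) E' \<alpha>' \<beta>'. counterexample V' E' \<alpha>' \<beta>' \<Longrightarrow> card V \<le> card V'"
  shows "\<not> (\<exists>S. S \<noteq> {} \<and> two_degenerate_one_island V E S \<and> card S \<le> 12)"
proof
  assume "\<exists>S. S \<noteq> {} \<and> two_degenerate_one_island V E S \<and> card S \<le> 12"
  then obtain S where S: "S \<noteq> {}" "two_degenerate_one_island V E S" "card S \<le> 12" by blast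
  from assms(1) have G: "graph V E" "colouring5 V E \<alpha>" "colouring5 V E \<beta>"
    by (simp_all add: counterexample_def)
  have "S \<subseteq> V" using S(2) by (simp add: two_degenerate_one_island_def)
  with S(1) have "V - S \<subset> V" by blast
  then obtain cs where "recolouring_seq (V - S) E cs \<alpha> \<beta>" "\<forall>v\<in>V - S. times_recoloured cs v \<le> 6143"
    using minimal_counterexample_recolourable_psubset[of V E \<alpha> \<beta> "V - S"] assms by blast
  then obtain cs' where "recolouring_seq V E cs' \<alpha> \<beta>" "\<forall>v\<in>V. times_recoloured cs' v \<le> 6143"
    using recolouring_seq_extend_island[OF G(1) S(2,3) G(2,3)] by blast
  with assms(1) show False by (auto simp: counterexample_def)
qed

end
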